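(* (i) There exists a zero-dimensional locally compact metrizable abelian group in which every element $x$ satisfies $2x=0$ and which is not $g$-reversible. (ii) There exists a locally connected locally compact metrizable abelian group which is not $g$-reversible.
   Context: All topological groups are assumed Hausdorff. A topological group $G$ is called $g$-reversible if every continuous automorphism of $G$ (i.e. every continuous group isomorphism of $G$ onto itself) is an open map. *)

theory Defs
  imports "HOL-Analysis.Analysis" "HOL-Algebra.Group"
begin

definition topological_group :: "('a, 'b) monoid_scheme \<Rightarrow> 'a topology \<Rightarrow> bool" where
  "topological_group G X \<longleftrightarrow>
     group G \<and> topspace X = carrier G \<and> Hausdorff_space X \<and>
     continuous_map (prod_topology X X) X (\<lambda>(x, y). x \<otimes>\<^bsub>G\<^esub> y) \<and>
     continuous_map X X (\<lambda>x. inv\<^bsub>G\<^esub> x)"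

definition continuous_automorphism :: "('a, 'b) monoid_scheme \<Rightarrow> 'a topology \<Rightarrow> ('a \<Rightarrow> 'a) \<Rightarrow> bool" where
  "continuous_automorphism G X f \<longleftrightarrow> f \<in> iso G G \<and> continuous_map X X f"

definition g_reversible :: "('a, 'b) monoid_scheme \<Rightarrow> 'a topology \<Rightarrow> bool" where
  "g_reversible G X \<longleftrightarrow> (\<forall>f. continuous_automorphism G X f \<longrightarrow> open_map X X f)"

end

theory Submission
  imports Defs "HOL-Algebra.Product_Groups"
begin

(*
  Let H be a nontrivial compact metrizable group and give H^N x H^N the topology that is discrete
  on the first factor and the product topology on the second. The automorphism

    (d, k) |-> (odd coordinates of d, even coordinates of d interleaved with k)

  is continuous, since each coordinate of the image depends either on the discrete factor or on a
  single coordinate of k. It is not open: it maps the open set {c} x H^N onto a set whose second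
  component has all its even coordinates fixed, and no open subset of H^N fixes infinitely many
  coordinates. The group is locally compact and metrizable; for H = {-1, 1} it is zero-dimensional
  of exponent 2, and for H the circle it is locally connected because the circle is connected.
  Both examples are finally transported along an injection to the carrier nat => real.
*)

lemma dimension_le_0_iff_clopen_neighbourhoods:
  "X dim_le 0 \<longleftrightarrow>
     (\<forall>W x. openin X W \<and> x \<in> W \<longrightarrow> (\<exists>U. closedin X U \<and> openin X U \<and> x \<in> U \<and> U \<subseteq> W))"
  by (simp add: dimension_le_0_neighbourhood_base_of_clopen open_neighbourhood_base_of)

lemma dimension_le_0_prod_topology:
  assumes "X dim_le 0" "Y dim_le 0"
  shows "prod_topology X Y dim_le 0"
  unfolding dimension_le_0_iff_clopen_neighbourhoods
proof (intro allI impI)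
  fix W z assume "openin (prod_topology X Y) W \<and> z \<in> W"
  then obtain U V where "openin X U" "openin Y V" "fst z \<in> U" "snd z \<in> V" "U \<times> V \<subseteq> W"
    unfolding openin_prod_topology_alt by (metis prod.collapse)
  moreover obtain C where "closedin X C" "openin X C" "fst z \<in> C" "C \<subseteq> U"
    using assms(1) \<open>openin X U\<close> \<open>fst z \<in> U\<close>
    unfolding dimension_le_0_iff_clopen_neighbourhoods by blast
  moreover obtain D where "closedin Y D" "openin Y D" "snd z \<in> D" "D \<subseteq> V"
    using assms(2) \<open>openin Y V\<close> \<open>snd z \<in> V\<close>
    unfolding dimension_le_0_iff_clopen_neighbourhoods by blast
  ultimately show "\<exists>U. closedin (prod_topology X Y) U \<and> openin (prod_topology X Y) U \<and> z \<in> U \<and> U \<subseteq> W"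
    by (intro exI[of _ "C \<times> D"])
       (auto simp: closedin_prod_Times_iff openin_prod_Times_iff mem_Times_iff)
qed

lemma dimension_le_0_product_topology:
  assumes "\<And>i. i \<in> I \<Longrightarrow> X i dim_le 0"
  shows "product_topology X I dim_le 0"
  unfolding dimension_le_0_iff_clopen_neighbourhoods
proof (intro allI impI)
  fix W x assume "openin (product_topology X I) W \<and> x \<in> W"
  then have "\<exists>U. finite {i \<in> I. U i \<noteq> topspace (X i)} \<and> (\<forall>i\<in>I. openin (X i) (U i)) \<and>
               x \<in> Pi\<^sub>E I U \<and> Pi\<^sub>E I U \<subseteq> W"
    by (simp add: openin_product_topology_alt)
  then obtain U where fin: "finite {i \<in> I. U i \<noteq> topspace (X i)}"
    and U: "\<forall>i\<in>I. openin (X i) (U i)" and x: "x \<in> Pi\<^sub>E I U" and UW: "Pi\<^sub>E I U \<subseteq> W"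
    by blast
  have "\<exists>C. closedin (X i) C \<and> openin (X i) C \<and> x i \<in> C \<and> C \<subseteq> U i" if "i \<in> I" for i
  proof -
    have "openin (X i) (U i)" "x i \<in> U i"
      using U x that by (auto simp: PiE_iff)
    then show ?thesis
      using assms[OF that] unfolding dimension_le_0_iff_clopen_neighbourhoods by blast
  qed
  then obtain C where C: "\<And>i. i \<in> I \<Longrightarrow> closedin (X i) (C i) \<and> openin (X i) (C i) \<and> x i \<in> C i \<and> C i \<subseteq> U i"
    by metis
  \<comment> \<open>only the finitely many nontrivial factors are shrunk, so that the box stays open\<close>
  define C' where "C' i = (if U i = topspace (X i) then topspace (X i) else C i)" for i
  have "closedin (product_topology X I) (Pi\<^sub>E I C')"
    using C by (simp add: closedin_product_topology C'_def)
  moreover have "openin (product_topology X I) (Pi\<^sub>E I C')"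
  proof -
    have "{i \<in> I. C' i \<noteq> topspace (X i)} \<subseteq> {i \<in> I. U i \<noteq> topspace (X i)}"
      by (auto simp: C'_def)
    moreover have "\<forall>i\<in>I. openin (X i) (C' i)"
      using C by (simp add: C'_def)
    ultimately show ?thesis
      by (simp add: openin_PiE_gen finite_subset[OF _ fin])
  qed
  moreover have "x \<in> Pi\<^sub>E I C'"
    using C x by (auto simp: C'_def PiE_iff)
  moreover have "Pi\<^sub>E I C' \<subseteq> W"
  proof -
    have "Pi\<^sub>E I C' \<subseteq> Pi\<^sub>E I U"
      using C by (intro PiE_mono) (simp add: C'_def)
    then show ?thesis
      using UW by (rule order_trans)
  qed
  ultimately show "\<exists>V. closedin (product_topology X I) V \<and> openin (product_topology X I) V \<and> x \<in> V \<and> V \<subseteq> W"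
    by blast
qed

lemma openin_product_topology_eventually_upd:
  assumes "openin (product_topology X UNIV) V" "x \<in> V"
  shows "\<forall>\<^sub>F i in cofinite. \<forall>y \<in> topspace (X i). x(i := y) \<in> V"
proof -
  have "\<exists>U. finite {i. U i \<noteq> topspace (X i)} \<and> (\<forall>i. openin (X i) (U i)) \<and> x \<in> Pi\<^sub>E UNIV U \<and> Pi\<^sub>E UNIV U \<subseteq> V"
    using assms by (simp add: openin_product_topology_alt)
  then obtain U where fin: "finite {i. U i \<noteq> topspace (X i)}"
    and x: "x \<in> Pi\<^sub>E UNIV U" and UV: "Pi\<^sub>E UNIV U \<subseteq> V"
    by blast
  have "x(i := y) \<in> V" if "U i = topspace (X i)" "y \<in> topspace (X i)" for i y
    using x that UV by (auto simp: PiE_iff)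
  then have "{i. \<not> (\<forall>y \<in> topspace (X i). x(i := y) \<in> V)} \<subseteq> {i. U i \<noteq> topspace (X i)}"
    by blast
  then show ?thesis
    by (simp add: eventually_cofinite finite_subset[OF _ fin])
qed

lemma locally_connected_space_top_of_set:
  assumes "locally connected S"
  shows "locally_connected_space (top_of_set S)"
  unfolding locally_connected_space_def neighbourhood_base_of
proof (intro allI impI)
  fix W x assume Wx: "openin (top_of_set S) W \<and> x \<in> W"
  then obtain U V where "openin (top_of_set S) U" "connected V" "x \<in> U" "U \<subseteq> V" "V \<subseteq> W"
    using locallyE[OF assms] by metis
  moreover have "W \<subseteq> S"
    using Wx openin_subset by force
  ultimately show "\<exists>U V. openin (top_of_set S) U \<and> connectedin (top_of_set S) V \<and> x \<in> U \<and> U \<subseteq> V \<and> V \<subseteq> W"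
    by (intro exI[of _ U] exI[of _ V]) (auto simp: connectedin_subtopology)
qed

lemma continuous_map_group_mult:
  assumes "topological_group G X" "continuous_map Z X f" "continuous_map Z X g"
  shows "continuous_map Z X (\<lambda>z. f z \<otimes>\<^bsub>G\<^esub> g z)"
proof -
  have "continuous_map Z (prod_topology X X) (\<lambda>z. (f z, g z))"
    using assms by (simp add: continuous_map_paired)
  from continuous_map_compose[OF this, of X "\<lambda>(x, y). x \<otimes>\<^bsub>G\<^esub> y"] show ?thesis
    using assms(1) by (simp add: topological_group_def o_def)
qed

lemma continuous_map_group_inv:
  assumes "topological_group G X" "continuous_map Z X f"
  shows "continuous_map Z X (\<lambda>z. inv\<^bsub>G\<^esub> f z)"
  using continuous_map_compose[OF assms(2), of X "m_inv G"] assms(1)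
  by (simp add: topological_group_def o_def)

lemma topological_group_discrete_topology:
  assumes "group G"
  shows "topological_group G (discrete_topology (carrier G))"
  using assms unfolding topological_group_def
  by (auto simp flip: prod_topology_discrete_topology intro: monoid.m_closed[OF group.is_monoid])

lemma topological_group_DirProd:
  assumes G: "topological_group G X" and H: "topological_group H Y"
  shows "topological_group (G \<times>\<times> H) (prod_topology X Y)"
proof -
  let ?Z = "prod_topology (prod_topology X Y) (prod_topology X Y)"
  have groups: "group G" "group H" and tops: "topspace X = carrier G" "topspace Y = carrier H"
    using G H by (auto simp: topological_group_def)
  have "continuous_map ?Z X (fst \<circ> fst)" "continuous_map ?Z X (fst \<circ> snd)"
       "continuous_map ?Z Y (snd \<circ> fst)" "continuous_map ?Z Y (snd \<circ> snd)"
    using continuous_map_compose[OF continuous_map_fst continuous_map_fst]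
      continuous_map_compose[OF continuous_map_snd continuous_map_fst]
      continuous_map_compose[OF continuous_map_fst continuous_map_snd]
      continuous_map_compose[OF continuous_map_snd continuous_map_snd] by auto
  then have "continuous_map ?Z (prod_topology X Y)
      (\<lambda>z. ((fst \<circ> fst) z \<otimes>\<^bsub>G\<^esub> (fst \<circ> snd) z, (snd \<circ> fst) z \<otimes>\<^bsub>H\<^esub> (snd \<circ> snd) z))"
    by (intro continuous_map_pairedI continuous_map_group_mult[OF G] continuous_map_group_mult[OF H])
  then have "continuous_map ?Z (prod_topology X Y) (\<lambda>(p, q). p \<otimes>\<^bsub>G \<times>\<times> H\<^esub> q)"
    by (simp add: case_prod_unfold mult_DirProd')
  moreover have "continuous_map (prod_topology X Y) (prod_topology X Y) (m_inv (G \<times>\<times> H))"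
  proof (rule continuous_map_eq)
    show "continuous_map (prod_topology X Y) (prod_topology X Y) (\<lambda>p. (inv\<^bsub>G\<^esub> fst p, inv\<^bsub>H\<^esub> snd p))"
      by (intro continuous_map_pairedI continuous_map_group_inv[OF G] continuous_map_group_inv[OF H]
          continuous_map_fst continuous_map_snd)
  qed (use groups tops in auto)
  ultimately show ?thesis
    using G H groups tops
    by (simp add: topological_group_def DirProd_group Hausdorff_space_prod_topology)
qed

lemma topological_group_product_group:
  assumes G: "\<And>i. topological_group (G i) (X i)"
  shows "topological_group (product_group UNIV G) (product_topology X UNIV)"
proof -
  let ?P = "product_topology X UNIV"
  have groups: "\<And>i. group (G i)" and tops: "\<And>i. topspace (X i) = carrier (G i)"
    using G by (auto simp: topological_group_def)
  have coordinate: "continuous_map ?P (X i) (\<lambda>x. x i)" for i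
    by (simp add: continuous_map_product_projection)
  have "continuous_map (prod_topology ?P ?P) ?P (\<lambda>(x, y). x \<otimes>\<^bsub>product_group UNIV G\<^esub> y)"
    unfolding continuous_map_componentwise_UNIV
    using continuous_map_group_mult[OF G continuous_map_compose[OF continuous_map_fst coordinate]
                                           continuous_map_compose[OF continuous_map_snd coordinate]]
    by (simp add: case_prod_unfold o_def)
  moreover have "continuous_map ?P ?P (m_inv (product_group UNIV G))"
  proof (rule continuous_map_eq)
    show "continuous_map ?P ?P (\<lambda>x i. inv\<^bsub>G i\<^esub> x i)"
      unfolding continuous_map_componentwise_UNIV
      using continuous_map_group_inv[OF G coordinate] by simp
  qed (use groups tops in auto)
  ultimately show ?thesis
    using G groups tops
    by (simp add: topological_group_def Hausdorff_space_product_topology)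
qed

lemma comm_group_DirProd:
  assumes "comm_group G" "comm_group H"
  shows "comm_group (G \<times>\<times> H)"
proof (rule group.group_comm_groupI)
  show "group (G \<times>\<times> H)"
    using assms by (simp add: DirProd_group comm_group.axioms(2))
qed (use assms in \<open>auto simp: comm_monoid.m_comm comm_group.axioms(1)\<close>)

lemma comm_group_product_group:
  assumes "\<And>i. i \<in> I \<Longrightarrow> comm_group (G i)"
  shows "comm_group (product_group I G)"
proof (rule group.group_comm_groupI)
  show "group (product_group I G)"
    using assms by (simp add: comm_group.axioms(2))
qed (use assms in \<open>auto simp: PiE_iff comm_monoid.m_comm comm_group.axioms(1) intro!: restrict_ext\<close>)

locale topological_group_iso =
  fixes G :: "('a, 'c) monoid_scheme" and X :: "'a topology"
    and G' :: "('b, 'd) monoid_scheme" and X' :: "'b topology" and \<phi> :: "'a \<Rightarrow> 'b"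
  assumes topological_group: "topological_group G X" and group': "group G'"
    and iso: "\<phi> \<in> iso G G'" and homeomorphic: "homeomorphic_map X X' \<phi>"
begin

lemma group: "group G" and topspace: "topspace X = carrier G"
  using topological_group by (auto simp: topological_group_def)

lemma group_hom: "group_hom G G' \<phi>"
  using group group' iso by (simp add: group_hom_def group_hom_axioms_def iso_def)

lemma topspace': "topspace X' = carrier G'"
  using iso homeomorphic_imp_surjective_map[OF homeomorphic]
  by (simp add: topspace iso_def bij_betw_def)

lemma homeomorphic_space: "X homeomorphic_space X'"
  using homeomorphic by (rule homeomorphic_map_imp_homeomorphic_space)

lemma inverse_iso: "inv_into (carrier G) \<phi> \<in> iso G' G"
  using group.iso_set_sym[OF group iso] .

lemma homeomorphic_maps_inverse: "homeomorphic_maps X X' \<phi> (inv_into (carrier G) \<phi>)"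
proof -
  obtain \<psi> where \<psi>: "homeomorphic_maps X X' \<phi> \<psi>"
    using homeomorphic homeomorphic_map_maps by blast
  have inj: "inj_on \<phi> (carrier G)"
    using iso by (simp add: iso_def bij_betw_def)
  have "inv_into (carrier G) \<phi> y = \<psi> y" if "y \<in> topspace X'" for y
  proof -
    have "\<psi> y \<in> carrier G" "\<phi> (\<psi> y) = y"
      using \<psi> that by (auto simp: homeomorphic_maps_def continuous_map_def topspace)
    then show ?thesis
      using inj by (metis inv_into_f_f)
  qed
  then show ?thesis
    using \<psi> inj unfolding homeomorphic_maps_def by (auto simp: topspace intro: continuous_map_eq)
qed

lemma topological_group': "topological_group G' X'"
proof -
  interpret \<phi>: group_hom G G' \<phi> by (rule group_hom)
  let ?\<psi> = "inv_into (carrier G) \<phi>"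
  have \<phi>: "continuous_map X X' \<phi>" and \<psi>: "continuous_map X' X ?\<psi>"
    and \<phi>\<psi>: "\<And>y. y \<in> carrier G' \<Longrightarrow> \<phi> (?\<psi> y) = y"
    using homeomorphic_maps_inverse by (auto simp: homeomorphic_maps_def topspace')
  have \<psi>_carrier: "\<And>y. y \<in> carrier G' \<Longrightarrow> ?\<psi> y \<in> carrier G"
    using \<psi> by (auto simp: continuous_map_def topspace topspace')
  have "continuous_map (prod_topology X' X') X' (\<lambda>z. \<phi> (?\<psi> (fst z) \<otimes>\<^bsub>G\<^esub> ?\<psi> (snd z)))"
    using continuous_map_group_mult[OF topological_group
        continuous_map_compose[OF continuous_map_fst \<psi>] continuous_map_compose[OF continuous_map_snd \<psi>]]
    by (intro continuous_map_compose[OF _ \<phi>, unfolded o_def]) (simp add: o_def)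
  then have mult: "continuous_map (prod_topology X' X') X' (\<lambda>(x, y). x \<otimes>\<^bsub>G'\<^esub> y)"
    by (rule continuous_map_eq) (auto simp: topspace' \<phi>\<psi> \<psi>_carrier)
  have "continuous_map X' X' (\<lambda>y. \<phi> (inv\<^bsub>G\<^esub> ?\<psi> y))"
    using continuous_map_group_inv[OF topological_group \<psi>]
    by (intro continuous_map_compose[OF _ \<phi>, unfolded o_def])
  then have inv: "continuous_map X' X' (m_inv G')"
    by (rule continuous_map_eq) (simp add: topspace' \<phi>\<psi> \<psi>_carrier)
  have "Hausdorff_space X'"
    using topological_group homeomorphic_Hausdorff_space[OF homeomorphic_space]
    by (simp add: topological_group_def)
  with mult inv show ?thesis
    using group' by (simp add: topological_group_def topspace')
qed

lemma comm_group': "comm_group G \<Longrightarrow> comm_group G'"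
  using comm_group.iso_imp_comm_group iso group' group.is_monoid unfolding is_iso_def by blast

lemma square_one': "\<forall>x\<in>carrier G. x \<otimes>\<^bsub>G\<^esub> x = \<one>\<^bsub>G\<^esub> \<Longrightarrow> \<forall>y\<in>carrier G'. y \<otimes>\<^bsub>G'\<^esub> y = \<one>\<^bsub>G'\<^esub>"
proof -
  interpret \<phi>: group_hom G G' \<phi> by (rule group_hom)
  assume square_one: "\<forall>x\<in>carrier G. x \<otimes>\<^bsub>G\<^esub> x = \<one>\<^bsub>G\<^esub>"
  have "carrier G' = \<phi> ` carrier G"
    using iso by (simp add: iso_def bij_betw_def)
  with square_one show ?thesis
    by (auto simp flip: \<phi>.hom_mult)
qed

lemma not_g_reversible': "\<not> g_reversible G X \<Longrightarrow> \<not> g_reversible G' X'"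
proof
  let ?\<psi> = "inv_into (carrier G) \<phi>"
  assume "\<not> g_reversible G X" and reversible: "g_reversible G' X'"
  then obtain f where f_iso: "f \<in> iso G G" and f_cont: "continuous_map X X f" and not_open: "\<not> open_map X X f"
    by (auto simp: g_reversible_def continuous_automorphism_def)
  have f_topspace: "\<And>x. x \<in> topspace X \<Longrightarrow> f x \<in> topspace X"
    using f_cont by (simp add: continuous_map_def Pi_iff)
  have \<psi>: "homeomorphic_map X' X ?\<psi>" and \<psi>\<phi>: "\<And>x. x \<in> topspace X \<Longrightarrow> ?\<psi> (\<phi> x) = x"
    using homeomorphic_maps_inverse by (auto simp: homeomorphic_maps_map)
  have "\<phi> \<circ> f \<circ> ?\<psi> \<in> iso G' G'"
    by (rule iso_set_trans[OF inverse_iso iso_set_trans[OF f_iso iso]])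
  moreover have "continuous_map X' X' (\<phi> \<circ> f \<circ> ?\<psi>)"
    using homeomorphic_imp_continuous_map[OF \<psi>] f_cont homeomorphic_imp_continuous_map[OF homeomorphic]
    by (intro continuous_map_compose)
  ultimately have "open_map X' X' (\<phi> \<circ> f \<circ> ?\<psi>)"
    using reversible by (simp add: g_reversible_def continuous_automorphism_def)
  then have "open_map X X (?\<psi> \<circ> (\<phi> \<circ> f \<circ> ?\<psi>) \<circ> \<phi>)"
    by (rule open_map_compose[OF homeomorphic_imp_open_map[OF homeomorphic]
          open_map_compose[OF _ homeomorphic_imp_open_map[OF \<psi>]]])
  then have "open_map X X f"
    by (rule open_map_eq) (simp add: \<psi>\<phi> f_topspace)
  with not_open show False ..
qed

end

definition image_group :: "('a \<Rightarrow> 'b) \<Rightarrow> ('a, 'c) monoid_scheme \<Rightarrow> 'b monoid" where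
  "image_group e G =
     \<lparr>carrier = e ` carrier G,
      mult = (\<lambda>x y. e (inv_into (carrier G) e x \<otimes>\<^bsub>G\<^esub> inv_into (carrier G) e y)),
      one = e \<one>\<^bsub>G\<^esub>\<rparr>"

definition image_topology :: "('a \<Rightarrow> 'b) \<Rightarrow> 'a topology \<Rightarrow> 'b topology" where
  "image_topology e X = pullback_topology (e ` topspace X) (inv_into (topspace X) e) X"

lemma
  assumes "group G" "inj_on e (carrier G)"
  shows group_image_group: "group (image_group e G)"
    and iso_image_group: "e \<in> iso G (image_group e G)"
proof -
  interpret group G by fact
  show "group (image_group e G)"
  proof (rule groupI)
    fix y assume "y \<in> carrier (image_group e G)"
    then obtain x where "x \<in> carrier G" "y = e x"
      by (auto simp: image_group_def)
    then show "\<exists>z\<in>carrier (image_group e G). z \<otimes>\<^bsub>image_group e G\<^esub> y = \<one>\<^bsub>image_group e G\<^esub>"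
      using assms(2) by (intro bexI[of _ "e (inv\<^bsub>G\<^esub> x)"]) (auto simp: image_group_def)
  qed (use assms(2) in \<open>auto simp: image_group_def m_assoc\<close>)
  show "e \<in> iso G (image_group e G)"
    using assms(2) by (auto simp: iso_def hom_def bij_betw_def image_group_def)
qed

lemma homeomorphic_maps_image_topology:
  assumes "inj_on e (topspace X)"
  shows "homeomorphic_maps X (image_topology e X) e (inv_into (topspace X) e)"
  unfolding homeomorphic_maps_def image_topology_def
proof (intro conjI ballI)
  show "continuous_map X (pullback_topology (e ` topspace X) (inv_into (topspace X) e) X) e"
  proof (rule continuous_map_pullback')
    show "continuous_map X X (inv_into (topspace X) e \<circ> e)"
      by (rule continuous_map_eq[OF continuous_map_id]) (simp add: assms)
  qed auto
  show "continuous_map (pullback_topology (e ` topspace X) (inv_into (topspace X) e) X) X (inv_into (topspace X) e)"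
    using continuous_map_pullback[OF continuous_map_id] by (simp add: o_def)
qed (auto simp: assms topspace_pullback_topology inv_into_into)

lemma topological_group_iso_image:
  assumes "topological_group G X" "inj_on e (carrier G)"
  shows "topological_group_iso G X (image_group e G) (image_topology e X) e"
proof -
  have "group G" and topspace: "topspace X = carrier G"
    using assms(1) by (auto simp: topological_group_def)
  have "homeomorphic_maps X (image_topology e X) e (inv_into (topspace X) e)"
    using assms(2) topspace by (intro homeomorphic_maps_image_topology) simp
  then show ?thesis
    using assms \<open>group G\<close>
    by (intro topological_group_iso.intro group_image_group iso_image_group homeomorphic_maps_imp_map)
qed

definition interleave :: "(nat \<Rightarrow> 'a) \<Rightarrow> (nat \<Rightarrow> 'a) \<Rightarrow> nat \<Rightarrow> 'a" where
  "interleave f g n = (if even n then f (n div 2) else g (n div 2))"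

lemma interleave_even [simp]: "interleave f g (2 * n) = f n"
  by (simp add: interleave_def)

lemma interleave_odd [simp]: "interleave f g (Suc (2 * n)) = g n"
  by (simp add: interleave_def)

lemma interleave_evens_odds [simp]: "interleave (\<lambda>n. h (2 * n)) (\<lambda>n. h (Suc (2 * n))) = h"
  by (auto simp: fun_eq_iff interleave_def)

lemma interleave_eq_iff [simp]: "interleave f g = interleave f' g' \<longleftrightarrow> f = f' \<and> g = g'"
  by (metis interleave_even interleave_odd ext)

lemma inj_interleave_pair: "inj f \<Longrightarrow> inj (\<lambda>(d, k). interleave (f d) (f k))"
  by (auto simp: inj_def)

abbreviation power_group :: "('a, 'b) monoid_scheme \<Rightarrow> (nat \<Rightarrow> 'a) monoid" where
  "power_group H \<equiv> product_group UNIV (\<lambda>_. H)"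

abbreviation power_topology :: "'a topology \<Rightarrow> (nat \<Rightarrow> 'a) topology" where
  "power_topology T \<equiv> product_topology (\<lambda>_. T) UNIV"

definition mixed_topology :: "'a topology \<Rightarrow> ((nat \<Rightarrow> 'a) \<times> (nat \<Rightarrow> 'a)) topology" where
  "mixed_topology T = prod_topology (discrete_topology (topspace (power_topology T))) (power_topology T)"

definition mixed_shift :: "(nat \<Rightarrow> 'a) \<times> (nat \<Rightarrow> 'a) \<Rightarrow> (nat \<Rightarrow> 'a) \<times> (nat \<Rightarrow> 'a)" where
  "mixed_shift p = (\<lambda>n. fst p (Suc (2 * n)), interleave (\<lambda>n. fst p (2 * n)) (snd p))"

lemma topological_group_mixed:
  assumes "topological_group H T"
  shows "topological_group (power_group H \<times>\<times> power_group H) (mixed_topology T)"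
proof -
  have power: "topological_group (power_group H) (power_topology T)"
    using assms by (rule topological_group_product_group)
  then have "topspace (power_topology T) = carrier (power_group H)" "group (power_group H)"
    by (auto simp: topological_group_def)
  with power show ?thesis
    unfolding mixed_topology_def
    by (metis topological_group_DirProd topological_group_discrete_topology)
qed

lemma dimension_le_0_mixed_topology: "T dim_le 0 \<Longrightarrow> mixed_topology T dim_le 0"
  by (simp add: mixed_topology_def dimension_le_0_prod_topology dimension_le_0_product_topology)

lemma locally_compact_space_mixed_topology:
  "compact_space T \<Longrightarrow> locally_compact_space (mixed_topology T)"
  by (simp add: mixed_topology_def locally_compact_space_prod_topology compact_space_product_topology
      locally_compact_space_discrete_topology compact_imp_locally_compact_space)

lemma metrizable_space_mixed_topology:
  "metrizable_space T \<Longrightarrow> metrizable_space (mixed_topology T)"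
  unfolding mixed_topology_def metrizable_space_prod_topology metrizable_space_product_topology
  by (auto intro: countable_subset[of _ UNIV])

lemma locally_connected_space_mixed_topology:
  "\<lbrakk>locally_connected_space T; connected_space T\<rbrakk> \<Longrightarrow> locally_connected_space (mixed_topology T)"
  unfolding mixed_topology_def locally_connected_space_prod_topology locally_connected_space_product_topology
  by (simp add: locally_connected_space_discrete_topology)

lemma square_one_mixed:
  assumes "\<forall>x\<in>carrier H. x \<otimes>\<^bsub>H\<^esub> x = \<one>\<^bsub>H\<^esub>"
  shows "\<forall>x\<in>carrier (power_group H \<times>\<times> power_group H). x \<otimes>\<^bsub>power_group H \<times>\<times> power_group H\<^esub> x =
           \<one>\<^bsub>power_group H \<times>\<times> power_group H\<^esub>"
  using assms by (auto simp: mult_DirProd' PiE_iff fun_eq_iff)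

lemma mixed_shift_iso:
  assumes "group H"
  shows "mixed_shift \<in> iso (power_group H \<times>\<times> power_group H) (power_group H \<times>\<times> power_group H)"
proof -
  let ?M = "power_group H \<times>\<times> power_group H"
  define unshift :: "(nat \<Rightarrow> 'a) \<times> (nat \<Rightarrow> 'a) \<Rightarrow> (nat \<Rightarrow> 'a) \<times> (nat \<Rightarrow> 'a)"
    where "unshift p = (interleave (\<lambda>n. snd p (2 * n)) (fst p), \<lambda>n. snd p (Suc (2 * n)))" for p
  have carrier: "p \<in> carrier ?M \<longleftrightarrow> (\<forall>n. fst p n \<in> carrier H) \<and> (\<forall>n. snd p n \<in> carrier H)" for p
    by (cases p) (simp add: PiE_iff)
  have interleave_carrier: "interleave f g n \<in> carrier H"
    if "\<forall>n. f n \<in> carrier H" "\<forall>n. g n \<in> carrier H" for f g n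
    using that by (simp add: interleave_def)
  have "mixed_shift \<in> hom ?M ?M"
    by (auto simp: hom_def carrier mixed_shift_def interleave_carrier mult_DirProd' fun_eq_iff interleave_def PiE_iff)
  moreover have "bij_betw mixed_shift (carrier ?M) (carrier ?M)"
    by (rule bij_betw_byWitness[of _ unshift])
       (auto simp: carrier mixed_shift_def unshift_def interleave_carrier PiE_iff)
  ultimately show ?thesis
    by (simp add: iso_def)
qed

lemma continuous_map_mixed_shift:
  "continuous_map (mixed_topology T) (mixed_topology T) mixed_shift"
proof -
  let ?P = "power_topology T"
  let ?D = "discrete_topology (UNIV \<rightarrow>\<^sub>E topspace T)"
  have discrete_coordinate: "continuous_map (prod_topology ?D ?P) T (\<lambda>p. fst p n)" for n
  proof -
    have "continuous_map ?D T (\<lambda>d. d n)"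
      by auto
    from continuous_map_compose[OF continuous_map_fst this] show ?thesis
      by (simp add: o_def)
  qed
  have product_coordinate: "continuous_map (prod_topology ?D ?P) T (\<lambda>p. snd p n)" for n
    using continuous_map_compose[OF continuous_map_snd continuous_map_product_projection[of n UNIV "\<lambda>_. T"]]
    by (simp add: o_def)
  have "continuous_map (prod_topology ?D ?P) ?D (\<lambda>p n. fst p (Suc (2 * n)))"
  proof -
    have "continuous_map ?D ?D (\<lambda>d n. d (Suc (2 * n)))"
      by auto
    from continuous_map_compose[OF continuous_map_fst this] show ?thesis
      by (simp add: o_def)
  qed
  moreover have "continuous_map (prod_topology ?D ?P) ?P (\<lambda>p. interleave (\<lambda>n. fst p (2 * n)) (snd p))"
    unfolding continuous_map_componentwise_UNIV
    by (simp add: interleave_def discrete_coordinate product_coordinate)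
  ultimately show ?thesis
    unfolding mixed_topology_def mixed_shift_def[abs_def] topspace_product_topology
    by (simp add: continuous_map_paired)
qed

lemma mixed_shift_not_open_map:
  assumes "a \<in> topspace T" "b \<in> topspace T" "a \<noteq> b"
  shows "\<not> open_map (mixed_topology T) (mixed_topology T) mixed_shift"
proof
  let ?P = "power_topology T"
  define c where "c = (\<lambda>_::nat. a)"
  define S where "S = mixed_shift ` ({c} \<times> topspace ?P)"
  have c: "c \<in> topspace ?P"
    using assms(1) by (simp add: c_def PiE_iff)
  assume "open_map (mixed_topology T) (mixed_topology T) mixed_shift"
  moreover have "openin (mixed_topology T) ({c} \<times> topspace ?P)"
    using c by (simp add: mixed_topology_def openin_prod_Times_iff del: topspace_product_topology)
  ultimately have "openin (mixed_topology T) S"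
    by (simp add: open_map_def S_def)
  moreover have "(c, c) \<in> S"
    unfolding S_def
  proof (rule image_eqI)
    show "(c, c) = mixed_shift (c, c)"
      by (simp add: mixed_shift_def c_def fun_eq_iff interleave_def)
  qed (use c in simp)
  ultimately have "\<exists>U V. openin (discrete_topology (topspace ?P)) U \<and> openin ?P V \<and>
                      c \<in> U \<and> c \<in> V \<and> U \<times> V \<subseteq> S"
    unfolding mixed_topology_def openin_prod_topology_alt by (elim allE impE)
  then obtain U V where "openin ?P V" "c \<in> U" "c \<in> V" and UV: "U \<times> V \<subseteq> S"
    by blast
  obtain N where "\<forall>n\<ge>N. \<forall>y\<in>topspace T. c(n := y) \<in> V"
    using openin_product_topology_eventually_upd[OF \<open>openin ?P V\<close> \<open>c \<in> V\<close>]
    unfolding cofinite_eq_sequentially eventually_sequentially by blast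
  then have "(c, c(2 * N := b)) \<in> S"
    using UV \<open>c \<in> U\<close> assms(2) by auto
  then obtain k where "c(2 * N := b) = interleave (\<lambda>n. c (2 * n)) k"
    by (auto simp: S_def mixed_shift_def)
  from fun_cong[OF this, of "2 * N"] have "b = a"
    by (simp add: c_def)
  with assms(3) show False
    by simp
qed

lemma not_g_reversible_mixed:
  assumes "topological_group H T" "a \<in> carrier H" "a \<noteq> \<one>\<^bsub>H\<^esub>"
  shows "\<not> g_reversible (power_group H \<times>\<times> power_group H) (mixed_topology T)"
proof -
  have "group H" and topspace: "topspace T = carrier H"
    using assms(1) by (auto simp: topological_group_def)
  then have "continuous_automorphism (power_group H \<times>\<times> power_group H) (mixed_topology T) mixed_shift"
    by (simp add: continuous_automorphism_def mixed_shift_iso continuous_map_mixed_shift)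
  moreover have "\<not> open_map (mixed_topology T) (mixed_topology T) mixed_shift"
    using assms(2,3) topspace \<open>group H\<close>
    by (intro mixed_shift_not_open_map[of "\<one>\<^bsub>H\<^esub>" T a]) (auto simp: group.is_monoid monoid.one_closed)
  ultimately show ?thesis
    by (auto simp: g_reversible_def)
qed

definition sphere_group :: "'a::real_normed_div_algebra monoid" where
  "sphere_group = \<lparr>carrier = sphere 0 1, mult = (*), one = 1\<rparr>"

lemma carrier_sphere_group [simp]: "carrier sphere_group = sphere 0 1"
  by (simp add: sphere_group_def)

lemma group_sphere_group: "group (sphere_group :: 'a::real_normed_div_algebra monoid)"
proof (rule groupI)
  fix x :: 'a assume "x \<in> carrier sphere_group"
  then have "norm x = 1" "x \<noteq> 0"
    by auto
  then show "\<exists>y\<in>carrier sphere_group. y \<otimes>\<^bsub>sphere_group\<^esub> x = \<one>\<^bsub>sphere_group\<^esub>"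
    by (intro bexI[of _ "inverse x"]) (auto simp: sphere_group_def norm_inverse left_inverse)
qed (auto simp: sphere_group_def norm_mult mult.assoc)

lemma inv_sphere_group:
  "x \<in> sphere 0 1 \<Longrightarrow> inv\<^bsub>sphere_group\<^esub> x = inverse (x :: 'a::real_normed_div_algebra)"
  by (rule group.inv_equality[OF group_sphere_group])
     (auto simp: sphere_group_def norm_inverse intro!: left_inverse)

lemma topological_group_sphere_group:
  "topological_group sphere_group (top_of_set (sphere (0 :: 'a::real_normed_div_algebra) 1))"
  unfolding topological_group_def
proof (intro conjI)
  show "continuous_map (prod_topology (top_of_set (sphere 0 1)) (top_of_set (sphere 0 1)))
          (top_of_set (sphere (0 :: 'a) 1)) (\<lambda>(x, y). x \<otimes>\<^bsub>sphere_group\<^esub> y)"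
    unfolding prod_topology_subtopology_eu continuous_map_subtopology_eu
    by (auto simp: sphere_group_def case_prod_unfold norm_mult
        intro!: continuous_on_mult continuous_on_fst continuous_on_snd continuous_on_id)
  have "continuous_map (top_of_set (sphere 0 1)) (top_of_set (sphere (0 :: 'a) 1)) inverse"
    unfolding continuous_map_subtopology_eu
    by (auto simp: norm_inverse intro!: continuous_on_inverse[OF continuous_on_id, unfolded id_def])
  then show "continuous_map (top_of_set (sphere 0 1)) (top_of_set (sphere (0 :: 'a) 1)) (m_inv sphere_group)"
    by (rule continuous_map_eq) (simp add: inv_sphere_group)
qed (use group_sphere_group in \<open>auto simp: Hausdorff_space_subtopology\<close>)

lemma comm_group_sphere_group: "comm_group (sphere_group :: 'a::real_normed_field monoid)"
  by (rule group.group_comm_groupI[OF group_sphere_group]) (simp add: sphere_group_def mult.commute)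

lemma real_sphere_eq: "sphere (0::real) 1 = {-1, 1}"
  by (auto simp: abs_if split: if_splits)

lemma dimension_le_0_real_sphere: "top_of_set (sphere (0::real) 1) dim_le 0"
  by (simp add: real_sphere_eq subtopology_eq_discrete_topology_finite t1_space_euclidean)

lemma inj_interleave_Re_Im: "inj (\<lambda>z :: nat \<Rightarrow> complex. interleave (\<lambda>n. Re (z n)) (\<lambda>n. Im (z n)))"
proof (rule injI)
  fix z w :: "nat \<Rightarrow> complex"
  assume "interleave (\<lambda>n. Re (z n)) (\<lambda>n. Im (z n)) = interleave (\<lambda>n. Re (w n)) (\<lambda>n. Im (w n))"
  then have "Re (z n) = Re (w n) \<and> Im (z n) = Im (w n)" for n
    by (metis interleave_even interleave_odd)
  then show "z = w"
    by (simp add: fun_eq_iff complex_eq_iff)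
qed

lemma sphere_mixed_group_copy:
  fixes e :: "(nat \<Rightarrow> 'a::{real_normed_field,heine_borel}) \<times> (nat \<Rightarrow> 'a) \<Rightarrow> 'b"
  assumes "inj e"
  obtains G :: "'b monoid" and X
  where "topological_group G X" "comm_group G" "locally_compact_space X" "metrizable_space X"
    "\<not> g_reversible G X" "mixed_topology (top_of_set (sphere (0::'a) 1)) homeomorphic_space X"
    "\<forall>x \<in> sphere (0::'a) 1. x * x = 1 \<Longrightarrow> \<forall>y\<in>carrier G. y \<otimes>\<^bsub>G\<^esub> y = \<one>\<^bsub>G\<^esub>"
proof -
  let ?H = "sphere_group :: 'a monoid" and ?T = "top_of_set (sphere (0::'a) 1)"
  let ?G = "power_group ?H \<times>\<times> power_group ?H" and ?X = "mixed_topology ?T"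
  let ?G' = "image_group e ?G" and ?X' = "image_topology e ?X"
  interpret topological_group_iso ?G ?X ?G' ?X' e
    using topological_group_iso_image[OF topological_group_mixed[OF topological_group_sphere_group]
        inj_on_subset[OF assms subset_UNIV]] .
  have "compact_space ?T" "metrizable_space ?T"
    by (simp_all add: compact_space_subtopology metrizable_space_subtopology metrizable_space_euclidean)
  show thesis
  proof (rule that)
    show "topological_group ?G' ?X'"
      by (rule topological_group')
    show "comm_group ?G'"
      by (intro comm_group' comm_group_DirProd comm_group_product_group comm_group_sphere_group)
    show "locally_compact_space ?X'" "metrizable_space ?X'"
      using homeomorphic_locally_compact_space[OF homeomorphic_space] homeomorphic_metrizable_space[OF homeomorphic_space]
        locally_compact_space_mixed_topology metrizable_space_mixed_topology \<open>compact_space ?T\<close> \<open>metrizable_space ?T\<close>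
      by blast+
    show "\<not> g_reversible ?G' ?X'"
      by (intro not_g_reversible' not_g_reversible_mixed[of _ _ "-1"] topological_group_sphere_group)
         (simp_all add: sphere_group_def)
    show "?X homeomorphic_space ?X'"
      by (rule homeomorphic_space)
    show "\<forall>y\<in>carrier ?G'. y \<otimes>\<^bsub>?G'\<^esub> y = \<one>\<^bsub>?G'\<^esub>" if "\<forall>x \<in> sphere (0::'a) 1. x * x = 1"
      using that by (intro square_one' square_one_mixed) (simp add: sphere_group_def)
  qed
qed

theorem corollary4p5:
  shows "(\<exists>(G :: (nat \<Rightarrow> real) monoid) (X :: (nat \<Rightarrow> real) topology).
            topological_group G X \<and> comm_group G \<and>
            X dim_le 0 \<and> locally_compact_space X \<and> metrizable_space X \<and>
            (\<forall>x \<in> carrier G. x \<otimes>\<^bsub>G\<^esub> x = \<one>\<^bsub>G\<^esub>) \<and>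
            \<not> g_reversible G X)
       \<and> (\<exists>(G :: (nat \<Rightarrow> real) monoid) (X :: (nat \<Rightarrow> real) topology).
            topological_group G X \<and> comm_group G \<and>
            locally_connected_space X \<and> locally_compact_space X \<and> metrizable_space X \<and>
            \<not> g_reversible G X)"
proof
  obtain G :: "(nat \<Rightarrow> real) monoid" and X
    where "topological_group G X" "comm_group G" "locally_compact_space X" "metrizable_space X"
      "\<not> g_reversible G X" and homeo: "mixed_topology (top_of_set (sphere (0::real) 1)) homeomorphic_space X"
      and square_one: "\<forall>x \<in> sphere (0::real) 1. x * x = 1 \<Longrightarrow> \<forall>y\<in>carrier G. y \<otimes>\<^bsub>G\<^esub> y = \<one>\<^bsub>G\<^esub>"
    by (rule sphere_mixed_group_copy[OF inj_interleave_pair[OF inj_on_id2]]) blast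
  moreover have "X dim_le 0"
    using homeomorphic_space_dimension_le[OF homeo] dimension_le_0_mixed_topology[OF dimension_le_0_real_sphere]
    by blast
  moreover have "\<forall>y\<in>carrier G. y \<otimes>\<^bsub>G\<^esub> y = \<one>\<^bsub>G\<^esub>"
    by (rule square_one) (simp add: real_sphere_eq)
  ultimately show "\<exists>(G :: (nat \<Rightarrow> real) monoid) X. topological_group G X \<and> comm_group G \<and>
      X dim_le 0 \<and> locally_compact_space X \<and> metrizable_space X \<and>
      (\<forall>x \<in> carrier G. x \<otimes>\<^bsub>G\<^esub> x = \<one>\<^bsub>G\<^esub>) \<and> \<not> g_reversible G X"
    by blast
next
  obtain G :: "(nat \<Rightarrow> real) monoid" and X
    where "topological_group G X" "comm_group G" "locally_compact_space X" "metrizable_space X"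
      "\<not> g_reversible G X" and homeo: "mixed_topology (top_of_set (sphere (0::complex) 1)) homeomorphic_space X"
    by (rule sphere_mixed_group_copy[OF inj_interleave_pair[OF inj_interleave_Re_Im]]) blast
  moreover have "connected_space (top_of_set (sphere (0::complex) 1))"
    by (simp add: connected_space_subtopology connected_sphere)
  then have "locally_connected_space X"
    using homeomorphic_locally_connected_space[OF homeo]
      locally_connected_space_mixed_topology[OF locally_connected_space_top_of_set[OF locally_connected_sphere]]
    by blast
  ultimately show "\<exists>(G :: (nat \<Rightarrow> real) monoid) X. topological_group G X \<and> comm_group G \<and>
      locally_connected_space X \<and> locally_compact_space X \<and> metrizable_space X \<and> \<not> g_reversible G X"
    by blast
qed

end
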